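(* Let $k\ge 1$ and $1\le k^*\le k$ be integers, and run the Reduce-By-Median-Counter algorithm (defined in the context) with parameters $k,k^*$ on a weighted stream. Then for every integer $0\le j<k^*$ and every item $i\in[m]$, the estimate $\hat f_i$ returned by Estimate$(i)$ after processing the stream satisfies $$0\le f_i-\hat f_i\le \frac{N^{\mathrm{res}(j)}}{k^*-j}.$$
   Context: A weighted stream over the universe $[m]=\{1,\dots,m\}$ is a sequence of updates $(i_1,\Delta_1),\dots,(i_n,\Delta_n)$ with $i_t\in[m]$ and real weights $\Delta_t>0$. The frequency of $i$ is $f_i=\sum_{t: i_t=i}\Delta_t$, and $N=\sum_t\Delta_t$. $N^{\mathrm{res}(j)}$ denotes the sum of the frequencies of all items except the $j$ items of largest frequency (ties broken arbitrarily). The Reduce-By-Median-Counter algorithm with integer parameters $k\ge 1$ and $1\le k^*\le k$ maintains a set $T\subseteq[m]$ of at most $k$ items, each $j\in T$ carrying a nonnegative real counter $c(j)$; initially $T=\emptyset$. Update$(i,\Delta)$: if $i\in T$, set $c(i)\gets c(i)+\Delta$; else if $|T|<k$, add $i$ to $T$ with $c(i)=\Delta$; else call DecrementCounters(), and afterwards, if $\Delta\ge c_{k^*}$, add $i$ to $T$ with $c(i)=\Delta-c_{k^*}$. DecrementCounters(): let $c_{k^*}$ be the $k^*$-th largest value, counting multiplicity, of the multiset $\{c(j): j\in T\}$; for every $j\in T$ set $c(j)\gets c(j)-c_{k^*}$, and remove $j$ from $T$ if now $c(j)\le 0$. Estimate$(i)$ returns $c(i)$ if $i\in T$ and $0$ otherwise.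 *)

theory Defs
  imports Complex_Main "HOL-Library.Multiset"
begin

(* State of the algorithm: the set T of monitored items and the counters c
   (values of c outside T are irrelevant). Items are natural numbers. *)
type_synonym rbmc_state = "nat set \<times> (nat \<Rightarrow> real)"

definition kth_largest :: "nat set \<Rightarrow> (nat \<Rightarrow> real) \<Rightarrow> nat \<Rightarrow> real" where
  "kth_largest T c r = rev (sorted_list_of_multiset (image_mset c (mset_set T))) ! (r - 1)"

definition decrement_counters :: "nat \<Rightarrow> rbmc_state \<Rightarrow> rbmc_state" where
  "decrement_counters ks st =
     (let T = fst st; c = snd st; ck = kth_largest T c ks; c' = (\<lambda>j. c j - ck)
      in ({j \<in> T. c' j > 0}, c'))"

definition rbmc_update :: "nat \<Rightarrow> nat \<Rightarrow> rbmc_state \<Rightarrow> nat \<times> real \<Rightarrow> rbmc_state" where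
  "rbmc_update k ks st upd =
     (let T = fst st; c = snd st; i = fst upd; d = snd upd in
      if i \<in> T then (T, c(i := c i + d))
      else if card T < k then (insert i T, c(i := d))
      else (let ck = kth_largest T c ks; st' = decrement_counters ks st in
            if d \<ge> ck then (insert i (fst st'), (snd st')(i := d - ck)) else st'))"

definition rbmc_init :: rbmc_state where
  "rbmc_init = ({}, (\<lambda>_. 0))"

definition rbmc_run :: "nat \<Rightarrow> nat \<Rightarrow> (nat \<times> real) list \<Rightarrow> rbmc_state" where
  "rbmc_run k ks s = foldl (rbmc_update k ks) rbmc_init s"

definition rbmc_estimate :: "rbmc_state \<Rightarrow> nat \<Rightarrow> real" where
  "rbmc_estimate st i = (if i \<in> fst st then snd st i else 0)"

definition freq :: "(nat \<times> real) list \<Rightarrow> nat \<Rightarrow> real" where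
  "freq s i = sum_list (map snd (filter (\<lambda>u. fst u = i) s))"

definition Nres :: "nat \<Rightarrow> (nat \<times> real) list \<Rightarrow> nat \<Rightarrow> real" where
  "Nres m s j = sum_list (drop j (rev (sorted_list_of_multiset
                   (image_mset (freq s) (mset_set {1..m})))))"

end

theory Submission
  imports Defs
begin

text \<open>
  Let D be the total amount subtracted by DecrementCounters so far. An estimate never exceeds
  the true frequency, and a decrement by c(k*) raises every error f(i) - estimate(i) by at most
  c(k*), while the at least k* counters of value at least c(k*) each lose exactly c(k*). Hence
  all errors lie in [0, D] and sum to at least k* D. The j heaviest items contribute at most j D
  to this sum and every other item at most its frequency, so k* D \<le> j D + N_res(j).
\<close>

lemma length_sorted_list_of_multiset_image_mset_set:
  "length (sorted_list_of_multiset (image_mset c (mset_set T))) = card T"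
  by (metis mset_sorted_list_of_multiset size_image_mset size_mset size_mset_set)

lemma kth_largest_conv_nth:
  assumes "1 \<le> r" and "r \<le> card T"
  shows "kth_largest T c r = sorted_list_of_multiset (image_mset c (mset_set T)) ! (card T - r)"
  using assms by (simp add: kth_largest_def rev_nth length_sorted_list_of_multiset_image_mset_set)

lemma kth_largest_mem:
  assumes "finite T" and "1 \<le> r" and "r \<le> card T"
  shows "kth_largest T c r \<in> c ` T"
proof -
  let ?S = "sorted_list_of_multiset (image_mset c (mset_set T))"
  have "kth_largest T c r \<in> set ?S"
    using assms(2,3) nth_mem[of "card T - r" ?S]
    by (simp add: kth_largest_conv_nth length_sorted_list_of_multiset_image_mset_set
        del: set_sorted_list_of_multiset)
  with \<open>finite T\<close> show ?thesis by simp
qed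

lemma kth_largest_le_card:
  assumes "finite T" and "1 \<le> r" and "r \<le> card T"
  shows "r \<le> card {x \<in> T. kth_largest T c r \<le> c x}"
proof -
  define S where "S = sorted_list_of_multiset (image_mset c (mset_set T))"
  define v where "v = kth_largest T c r"
  define n where "n = card T"
  have len: "length S = n"
    unfolding S_def n_def by (rule length_sorted_list_of_multiset_image_mset_set)
  have v: "v = S ! (n - r)" using assms(2,3) unfolding v_def S_def n_def by (rule kth_largest_conv_nth)
  have "\<forall>y \<in> set (drop (n - r) S). v \<le> y"
  proof
    fix y assume "y \<in> set (drop (n - r) S)"
    then obtain i where "i < r" "y = S ! (n - r + i)"
      using assms(3) by (auto simp: in_set_conv_nth len n_def)
    moreover from \<open>i < r\<close> assms(3) have "n - r + i < n" unfolding n_def by linarith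
    ultimately show "v \<le> y" using v len sorted_nth_mono[of S "n - r" "n - r + i"] by (simp add: S_def)
  qed
  then have "r = length (filter (\<lambda>y. v \<le> y) (drop (n - r) S))"
    using assms len n_def by simp
  also have "\<dots> \<le> length (filter (\<lambda>y. v \<le> y) S)"
    by (metis append_take_drop_id filter_append length_append le_add2)
  also have "\<dots> = size (filter_mset (\<lambda>y. v \<le> y) (image_mset c (mset_set T)))"
    unfolding S_def by (metis mset_filter mset_sorted_list_of_multiset size_mset)
  also have "\<dots> = card {x \<in> T. v \<le> c x}"
    using assms(1) by (simp add: filter_mset_image_mset)
  finally show ?thesis unfolding v_def .
qed

definition rbmc_wf :: "nat \<Rightarrow> nat set \<Rightarrow> rbmc_state \<Rightarrow> bool" where
  "rbmc_wf k U st \<longleftrightarrow>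
     finite (fst st) \<and> card (fst st) \<le> k \<and> fst st \<subseteq> U \<and> (\<forall>x \<in> fst st. 0 \<le> snd st x)"

definition rbmc_error :: "(nat \<times> real) list \<Rightarrow> rbmc_state \<Rightarrow> nat \<Rightarrow> real" where
  "rbmc_error s st x = freq s x - rbmc_estimate st x"

lemma freq_snoc: "freq (s @ [(a, d)]) x = freq s x + (if x = a then d else 0)"
  by (simp add: freq_def)

lemma rbmc_update_full:
  assumes "a \<notin> T" and "\<not> card T < k"
  shows "rbmc_update k ks (T, c) (a, d) =
    (let ck = kth_largest T c ks; c' = (\<lambda>x. c x - ck); T' = {x \<in> T. 0 < c' x}
     in if ck \<le> d then (insert a T', c'(a := d - ck)) else (T', c'))"
  using assms by (simp add: rbmc_update_def decrement_counters_def Let_def)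

lemma rbmc_update_wf:
  assumes wf: "rbmc_wf k U (T, c)" and "a \<in> U" and "d > 0" and "1 \<le> ks" and "ks \<le> k"
  shows "rbmc_wf k U (rbmc_update k ks (T, c) (a, d))"
proof -
  from wf have fin: "finite T" and card: "card T \<le> k" unfolding rbmc_wf_def by auto
  consider "a \<in> T" | "a \<notin> T" "card T < k" | "a \<notin> T" "\<not> card T < k"
    by blast
  then show ?thesis
  proof cases
    case 1
    then show ?thesis using wf \<open>d > 0\<close> by (auto simp: rbmc_update_def rbmc_wf_def)
  next
    case 2
    then show ?thesis using wf \<open>a \<in> U\<close> \<open>d > 0\<close> by (auto simp: rbmc_update_def rbmc_wf_def)
  next
    case 3
    define ck where "ck = kth_largest T c ks"
    define T' where "T' = {x \<in> T. 0 < c x - ck}"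
    obtain y where "y \<in> T" "c y = ck"
      using kth_largest_mem[where c = c, OF fin \<open>1 \<le> ks\<close>] 3 card \<open>ks \<le> k\<close> unfolding ck_def by auto
    then have "T' \<subset> T" unfolding T'_def by auto
    then have "card T' < k" using psubset_card_mono[OF fin] 3 card by simp
    moreover have "finite T'" using fin unfolding T'_def by simp
    ultimately have "card (insert a T') \<le> k" by (simp add: card_insert_if)
    with 3 show ?thesis using wf \<open>a \<in> U\<close> \<open>card T' < k\<close> \<open>finite T'\<close>
      unfolding rbmc_update_full[OF 3] ck_def[symmetric] T'_def[symmetric]
      by (auto simp: rbmc_wf_def Let_def T'_def)
  qed
qed

lemma rbmc_error_update_full:
  assumes "a \<notin> T" and "\<not> card T < k"
  shows "rbmc_error (s @ [(a, d)]) (rbmc_update k ks (T, c) (a, d)) x =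
    rbmc_error s (T, c) x +
      (if x \<in> T then min (c x) (kth_largest T c ks) else if x = a then min d (kth_largest T c ks) else 0)"
  using assms(1)
  by (auto simp: rbmc_update_full[OF assms] Let_def rbmc_error_def rbmc_estimate_def freq_snoc)

lemma rbmc_update_error_increment:
  fixes s :: "(nat \<times> real) list"
  assumes wf: "rbmc_wf k U (T, c)" and "finite U" and "a \<in> U" and "d > 0"
    and "1 \<le> ks" and "ks \<le> k"
  defines "inc \<equiv> \<lambda>x. rbmc_error (s @ [(a, d)]) (rbmc_update k ks (T, c) (a, d)) x - rbmc_error s (T, c) x"
  obtains t where "\<And>x. 0 \<le> inc x \<and> inc x \<le> t" and "real ks * t \<le> (\<Sum>x\<in>U. inc x)"
proof (cases "a \<in> T \<or> card T < k")
  case True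
  then have "inc x = 0" for x
    unfolding inc_def by (auto simp: rbmc_update_def rbmc_error_def rbmc_estimate_def freq_snoc)
  then show ?thesis using that[of 0] by simp
next
  case False
  from wf have fin: "finite T" and card: "card T \<le> k" and sub: "T \<subseteq> U" and nonneg: "\<forall>x\<in>T. 0 \<le> c x"
    unfolding rbmc_wf_def by auto
  define ck where "ck = kth_largest T c ks"
  have ks_card: "ks \<le> card T" using False card \<open>ks \<le> k\<close> by simp
  have "ck \<in> c ` T" unfolding ck_def using kth_largest_mem[OF fin \<open>1 \<le> ks\<close> ks_card] .
  then have "0 \<le> ck" using nonneg by auto
  have inc: "inc x = (if x \<in> T then min (c x) ck else if x = a then min d ck else 0)" for x
    using False unfolding inc_def ck_def by (simp add: rbmc_error_update_full)
  have inc_nonneg: "0 \<le> inc x" for x using inc nonneg \<open>0 \<le> ck\<close> \<open>d > 0\<close> by auto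
  have "real ks * ck \<le> real (card {x \<in> T. ck \<le> c x}) * ck"
    using kth_largest_le_card[OF fin \<open>1 \<le> ks\<close> ks_card] \<open>0 \<le> ck\<close> unfolding ck_def
    by (simp add: mult_right_mono)
  also have "\<dots> = (\<Sum>x\<in>{x \<in> T. ck \<le> c x}. inc x)" by (simp add: inc)
  also have "\<dots> \<le> (\<Sum>x\<in>U. inc x)"
    using sub inc_nonneg by (intro sum_mono2 \<open>finite U\<close>) auto
  finally show ?thesis
    using that[of ck] \<open>0 \<le> ck\<close> inc_nonneg inc by auto
qed

lemma rbmc_run_error_bound:
  assumes "finite U" and "1 \<le> ks" and "ks \<le> k" and "\<forall>u \<in> set s. fst u \<in> U \<and> snd u > 0"
  shows "rbmc_wf k U (rbmc_run k ks s) \<and>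
    (\<exists>D. (\<forall>x. 0 \<le> rbmc_error s (rbmc_run k ks s) x \<and> rbmc_error s (rbmc_run k ks s) x \<le> D)
         \<and> real ks * D \<le> (\<Sum>x\<in>U. rbmc_error s (rbmc_run k ks s) x))"
  using assms(4)
proof (induction s rule: rev_induct)
  case Nil
  show ?case
    by (auto simp: rbmc_run_def rbmc_init_def rbmc_wf_def rbmc_error_def rbmc_estimate_def freq_def)
next
  case (snoc u s)
  obtain a d where u: "u = (a, d)" by force
  obtain T c where run: "rbmc_run k ks s = (T, c)" by force
  have run_snoc: "rbmc_run k ks (s @ [u]) = rbmc_update k ks (T, c) (a, d)"
    using run u by (simp add: rbmc_run_def)
  have "a \<in> U" "d > 0" using snoc.prems u by auto
  define e where "e = rbmc_error s (T, c)"
  define e' where "e' = rbmc_error (s @ [u]) (rbmc_update k ks (T, c) (a, d))"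
  from snoc obtain D where wf: "rbmc_wf k U (T, c)"
    and D: "\<And>x. 0 \<le> e x \<and> e x \<le> D" and D_sum: "real ks * D \<le> (\<Sum>x\<in>U. e x)"
    by (auto simp: run e_def)
  obtain t where t: "\<And>x. 0 \<le> e' x - e x \<and> e' x - e x \<le> t"
    and t_sum: "real ks * t \<le> (\<Sum>x\<in>U. e' x - e x)"
    using rbmc_update_error_increment[OF wf assms(1) \<open>a \<in> U\<close> \<open>d > 0\<close> assms(2,3)]
    unfolding e_def e'_def u by blast
  have "real ks * (D + t) \<le> (\<Sum>x\<in>U. e' x)"
    using D_sum t_sum by (simp add: sum_subtractf distrib_left)
  moreover have "0 \<le> e' x \<and> e' x \<le> D + t" for x
    using D[of x] t[of x] by linarith
  moreover have "rbmc_wf k U (rbmc_update k ks (T, c) (a, d))"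
    using rbmc_update_wf[OF wf \<open>a \<in> U\<close> \<open>d > 0\<close> assms(2,3)] .
  ultimately show ?case unfolding run_snoc e'_def by blast
qed

lemma sorted_list_of_multiset_image_mset:
  "sorted_list_of_multiset (image_mset f (mset xs)) = map f (sort_key f xs)"
proof -
  have "sorted_list_of_multiset (image_mset f (mset xs)) = sort (map f xs)"
    by (metis mset_map sorted_list_of_multiset_mset)
  also have "\<dots> = map f (sort_key f xs)"
    by (rule properties_for_sort) (simp_all add: mset_map)
  finally show ?thesis .
qed

lemma sum_list_drop_sorted_image_mset_set:
  assumes "finite U"
  obtains J where "J \<subseteq> U" and "card J \<le> j"
    and "sum_list (drop j (rev (sorted_list_of_multiset (image_mset f (mset_set U))))) = (\<Sum>x\<in>U - J. f x)"
proof -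
  obtain ys where "distinct ys" and "set ys = U" using finite_distinct_list[OF assms] by blast
  define xs where "xs = rev (sort_key f ys)"
  have "distinct xs" and "set xs = U"
    unfolding xs_def using \<open>distinct ys\<close> \<open>set ys = U\<close> by simp_all
  have "mset_set U = mset ys" using mset_set_set[OF \<open>distinct ys\<close>] \<open>set ys = U\<close> by simp
  then have "rev (sorted_list_of_multiset (image_mset f (mset_set U))) = map f xs"
    unfolding xs_def by (simp add: sorted_list_of_multiset_image_mset rev_map)
  then have "sum_list (drop j (rev (sorted_list_of_multiset (image_mset f (mset_set U)))))
      = (\<Sum>x\<in>set (drop j xs). f x)"
    using \<open>distinct xs\<close> by (simp add: drop_map sum_list_distinct_conv_sum_set)
  also have "set (drop j xs) = U - set (take j xs)"
  proof -
    have "set xs = set (take j xs) \<union> set (drop j xs)"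
      by (metis append_take_drop_id set_append)
    with \<open>set xs = U\<close> show ?thesis
      using set_take_disj_set_drop_if_distinct[OF \<open>distinct xs\<close>, of j j] by blast
  qed
  moreover have "card (set (take j xs)) \<le> j"
    using card_length[of "take j xs"] by (simp add: min_le_iff_disj)
  moreover have "set (take j xs) \<subseteq> U"
    using set_take_subset[of j xs] \<open>set xs = U\<close> by simp
  ultimately show ?thesis by (intro that[of "set (take j xs)"]) simp_all
qed

lemma sum_le_bounded_part_plus_rest:
  fixes g f :: "'a \<Rightarrow> real"
  assumes "finite U" and "J \<subseteq> U" and "card J \<le> j"
    and "\<And>x. 0 \<le> g x \<and> g x \<le> D" and "\<And>x. g x \<le> f x"
  shows "(\<Sum>x\<in>U. g x) \<le> real j * D + (\<Sum>x\<in>U - J. f x)"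
proof -
  have "0 \<le> D" using assms(4) order_trans by blast
  have "(\<Sum>x\<in>U. g x) = (\<Sum>x\<in>J. g x) + (\<Sum>x\<in>U - J. g x)"
    using assms(1,2) by (metis sum.subset_diff add.commute)
  also have "(\<Sum>x\<in>J. g x) \<le> real (card J) * D"
    using sum_mono[of J g "\<lambda>_. D"] assms(4) by simp
  also have "\<dots> \<le> real j * D"
    using \<open>0 \<le> D\<close> assms(3) by (simp add: mult_right_mono)
  also have "(\<Sum>x\<in>U - J. g x) \<le> (\<Sum>x\<in>U - J. f x)"
    using assms(5) by (rule sum_mono)
  finally show ?thesis by simp
qed

theorem theorem5:
  fixes k ks m j i :: nat and s :: "(nat \<times> real) list"
  assumes "1 \<le> k" and "1 \<le> ks" and "ks \<le> k"
    and "\<forall>u \<in> set s. fst u \<in> {1..m} \<and> snd u > 0"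
    and "j < ks" and "i \<in> {1..m}"
  shows "0 \<le> freq s i - rbmc_estimate (rbmc_run k ks s) i
       \<and> freq s i - rbmc_estimate (rbmc_run k ks s) i \<le> Nres m s j / real (ks - j)"
proof -
  define err where "err = rbmc_error s (rbmc_run k ks s)"
  obtain D where wf: "rbmc_wf k {1..m} (rbmc_run k ks s)"
    and D: "\<forall>x. 0 \<le> err x \<and> err x \<le> D" and D_sum: "real ks * D \<le> (\<Sum>x\<in>{1..m}. err x)"
    using rbmc_run_error_bound[of "{1..m}" ks k s] assms(2-4) unfolding err_def by auto
  obtain J where "J \<subseteq> {1..m}" and "card J \<le> j" and Nres: "Nres m s j = (\<Sum>x\<in>{1..m} - J. freq s x)"
    using sum_list_drop_sorted_image_mset_set[of "{1..m}" j "freq s"] unfolding Nres_def by auto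
  have "err x \<le> freq s x" for x
    using wf unfolding err_def rbmc_error_def rbmc_estimate_def rbmc_wf_def by auto
  then have "(\<Sum>x\<in>{1..m}. err x) \<le> real j * D + Nres m s j"
    unfolding Nres using sum_le_bounded_part_plus_rest \<open>J \<subseteq> {1..m}\<close> \<open>card J \<le> j\<close> D by blast
  with D_sum \<open>j < ks\<close> have "real (ks - j) * D \<le> Nres m s j"
    by (simp add: of_nat_diff algebra_simps)
  with \<open>j < ks\<close> have "D \<le> Nres m s j / real (ks - j)"
    by (simp add: field_simps)
  then show ?thesis using D unfolding err_def rbmc_error_def by (meson order_trans)
qed

end
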